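(* Let $\alpha\in\mathbb{C}^N$ and let $u$ be a holomorphic solution of the system $M_{p,q}(\alpha)u=0$ ($1\le p\ne q\le N$) on a domain $D\subset\{x\in\mathbb{C}^N:x_a\ne x_b\ \forall a\ne b\}$. Let $g=\begin{pmatrix}a&b\\c&d\end{pmatrix}\in SL(2,\mathbb{C})$, and let $D'$ be a simply connected domain on which $cx_k+d\ne0$ for all $k$ and $\big(\frac{ax_1+b}{cx_1+d},\dots,\frac{ax_N+b}{cx_N+d}\big)\in D$, with holomorphic branches of $(cx_k+d)^{\alpha_k}$ fixed on $D'$. Then $$\tilde u(x)=\prod_{k=1}^N(cx_k+d)^{\alpha_k}\;u\Big(\frac{ax_1+b}{cx_1+d},\dots,\frac{ax_N+b}{cx_N+d}\Big)$$ is again a solution of $M_{p,q}(\alpha)\tilde u=0$ for all $1\le p\ne q\le N$ on $D'$.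
   Context: $\partial_p=\partial/\partial x_p$; for $p\ne q$, $M_{p,q}(\alpha)=\partial_p\partial_q+\frac{\alpha_q}{x_p-x_q}\partial_p+\frac{\alpha_p}{x_q-x_p}\partial_q$. *)

theory Defs
  imports "HOL-Analysis.Analysis"
begin

text \<open>Points of C^N are modelled as complex ^ 'n with 'n a finite index type (N = CARD('n)).\<close>

definition cholomorphic_on :: "(complex ^ 'n \<Rightarrow> complex) \<Rightarrow> (complex ^ 'n) set \<Rightarrow> bool" where
  "cholomorphic_on f S \<longleftrightarrow>
     (\<forall>x\<in>S. \<exists>L. (f has_derivative L) (at x) \<and> (\<forall>(c::complex) v. L (c *s v) = c * L v))"

definition cupd :: "complex ^ 'n \<Rightarrow> 'n \<Rightarrow> complex \<Rightarrow> complex ^ 'n" where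
  "cupd x p t = (\<chi> i. if i = p then t else x $ i)"

definition cpartial :: "'n \<Rightarrow> (complex ^ 'n \<Rightarrow> complex) \<Rightarrow> complex ^ 'n \<Rightarrow> complex" where
  "cpartial p u x = deriv (\<lambda>t. u (cupd x p t)) (x $ p)"

definition Mop :: "complex ^ 'n \<Rightarrow> 'n \<Rightarrow> 'n \<Rightarrow> (complex ^ 'n \<Rightarrow> complex) \<Rightarrow> complex ^ 'n \<Rightarrow> complex" where
  "Mop \<alpha> p q u x =
     cpartial p (cpartial q u) x
     + (\<alpha> $ q / (x $ p - x $ q)) * cpartial p u x
     + (\<alpha> $ p / (x $ q - x $ p)) * cpartial q u x"

end

theory Submission
  imports Defs "HOL-Complex_Analysis.Complex_Analysis"
begin

text \<open>
  Write \<open>w\<^sub>k = 1 / (c x\<^sub>k + d)\<close> and \<open>y = g x\<close>. Because \<open>a d - b c = 1\<close>, \<open>dy\<^sub>k / dx\<^sub>k = w\<^sub>k\<^sup>2\<close>,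
  and the prefactor \<open>E = \<Prod>\<^sub>k (c x\<^sub>k + d)\<^bsup>\<alpha>\<^sub>k\<^esup>\<close> has logarithmic derivative \<open>\<alpha>\<^sub>p c w\<^sub>p\<close> in \<open>x\<^sub>p\<close>;
  so the chain rule gives \<open>\<partial>\<^sub>p u' = E (\<alpha>\<^sub>p c w\<^sub>p u + w\<^sub>p\<^sup>2 \<partial>\<^sub>p u)(y)\<close> for the transformed
  function \<open>u'\<close>. Differentiating once more in \<open>x\<^sub>q\<close>, \<open>q \<noteq> p\<close>, gives
  \<open>M\<^sub>p\<^sub>q u' (x) = E w\<^sub>p\<^sup>2 w\<^sub>q\<^sup>2 (M\<^sub>p\<^sub>q u)(y)\<close>: the terms in \<open>u\<close> and in its first derivatives cancel
  because \<open>w\<^sub>p - w\<^sub>q = c (x\<^sub>q - x\<^sub>p) w\<^sub>p w\<^sub>q\<close>, and \<open>y\<^sub>p - y\<^sub>q = (x\<^sub>p - x\<^sub>q) w\<^sub>p w\<^sub>q\<close>.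

  The only analytic input beyond the chain rule is that the mixed partial \<open>\<partial>\<^sub>p \<partial>\<^sub>q u\<close> of a
  holomorphic \<open>u\<close> exists: as a function of \<open>x\<^sub>p\<close>, \<open>\<partial>\<^sub>q u\<close> is a uniform limit of holomorphic
  difference quotients in \<open>x\<^sub>q\<close>, by the Cauchy estimate for the second derivative.
\<close>

section \<open>Partial derivatives along coordinate lines\<close>

lemma has_derivative_vec_lambda:
  fixes f :: "'n::finite \<Rightarrow> 'a::euclidean_space \<Rightarrow> 'b::real_normed_vector"
  assumes f: "\<And>k. (f k has_derivative f' k) (at x within S)"
  shows "((\<lambda>y. \<chi> k. f k y) has_derivative (\<lambda>h. \<chi> k. f' k h)) (at x within S)"
proof -
  have lin: "linear (f' k)" for k
    using f has_derivative_linear by blast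
  have "linear (\<lambda>h. \<chi> k. f' k h)"
    by (rule linearI) (simp_all add: vec_eq_iff linear_add[OF lin] linear_scale[OF lin])
  then have "bounded_linear (\<lambda>h. \<chi> k. f' k h)"
    by (simp add: linear_conv_bounded_linear)
  moreover
  have "((\<lambda>y. \<chi> k. (1 / norm (y - x)) *\<^sub>R (f k y - (f k x + f' k (y - x)))) \<longlongrightarrow> (\<chi> k. 0))
          (at x within S)"
    using f[unfolded has_derivative_within] by (intro tendsto_vec_lambda) blast
  moreover have "(\<lambda>y. \<chi> k. (1 / norm (y - x)) *\<^sub>R (f k y - (f k x + f' k (y - x))))
      = (\<lambda>y. (1 / norm (y - x)) *\<^sub>R ((\<chi> k. f k y) - ((\<chi> k. f k x) + (\<chi> k. f' k (y - x)))))"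
    by (simp add: fun_eq_iff vec_eq_iff)
  moreover have "(\<chi> k. 0) = (0 :: 'b ^ 'n)"
    by (simp add: vec_eq_iff)
  ultimately show ?thesis
    unfolding has_derivative_within by simp
qed

lemma cupd_nth [simp]: "cupd x p t $ i = (if i = p then t else x $ i)"
  by (simp add: cupd_def)

lemma cupd_cupd_same [simp]: "cupd (cupd x p t) p s = cupd x p s"
  by (simp add: vec_eq_iff)

lemma cupd_triv [simp]: "cupd x p (x $ p) = x"
  by (simp add: vec_eq_iff)

lemma cupd_commute: "p \<noteq> q \<Longrightarrow> cupd (cupd x p s) q t = cupd (cupd x q t) p s"
  by (auto simp: vec_eq_iff)

lemma has_derivative_cupd: "(cupd x p has_derivative cupd 0 p) (at t within S)"
proof -
  have "((\<lambda>t. if i = p then t else x $ i) has_derivative (\<lambda>h. if i = p then h else 0 $ i)) (at t within S)"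
    for i
    by (cases "i = p") (simp_all add: has_derivative_ident)
  then show ?thesis
    unfolding cupd_def by (rule has_derivative_vec_lambda)
qed

lemma open_vimage_cupd:
  assumes "open S"
  shows "open {t. cupd x p t \<in> S}"
proof -
  have "continuous_on UNIV (cupd x p)"
    by (meson continuous_at_imp_continuous_on has_derivative_continuous has_derivative_cupd)
  from open_vimage[OF assms this] show ?thesis
    by (simp add: vimage_def)
qed

lemma dist_cupd:
  fixes x :: "complex ^ 'n" and p :: 'n and t :: complex
  shows "dist (cupd x p t) x = dist t (x $ p)"
proof (rule antisym)
  have "dist (cupd x p t) x \<le> (\<Sum>i\<in>UNIV. dist (cupd x p t $ i) (x $ i))"
    unfolding dist_vec_def by (rule L2_set_le_sum) simp
  also have "\<dots> = (\<Sum>i\<in>UNIV. if i = p then dist t (x $ p) else 0)"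
    by (intro sum.cong) auto
  finally show "dist (cupd x p t) x \<le> dist t (x $ p)"
    by simp
  show "dist t (x $ p) \<le> dist (cupd x p t) x"
    using dist_vec_nth_le[where x = "cupd x p t" and y = x and i = p] by simp
qed

lemma dist_cupd_cupd_le:
  fixes z :: "complex ^ 'n"
  assumes "p \<noteq> q"
  shows "dist (cupd (cupd z p s) q t) z \<le> dist s (z $ p) + dist t (z $ q)"
  using dist_triangle[of "cupd (cupd z p s) q t" z "cupd z p s"] assms by (simp add: dist_cupd)

lemma continuous_on_cupd_cupd: "continuous_on A (\<lambda>w. cupd (cupd z p (fst w)) q (snd w))"
proof -
  have "continuous_on A (\<lambda>w. \<chi> i. if i = q then snd w else if i = p then fst w else z $ i)"
  proof (intro continuous_on_vec_lambda)
    show "continuous_on A (\<lambda>w. if i = q then snd w else if i = p then fst w else z $ i)" for i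
      by (cases "i = q"; cases "i = p") (auto intro!: continuous_intros)
  qed
  moreover have "(\<lambda>w. \<chi> i. if i = q then snd w else if i = p then fst w else z $ i)
                   = (\<lambda>w. cupd (cupd z p (fst w)) q (snd w))"
    by (simp add: fun_eq_iff vec_eq_iff)
  ultimately show ?thesis
    by (simp only:)
qed

lemma has_field_derivative_cpartial:
  assumes "cholomorphic_on f S" "x \<in> S"
  shows "((\<lambda>t. f (cupd x p t)) has_field_derivative cpartial p f x) (at (x $ p))"
proof -
  obtain L where L: "(f has_derivative L) (at (cupd x p (x $ p)))" "\<And>(c::complex) v. L (c *s v) = c * L v"
    using assms unfolding cholomorphic_on_def by auto
  have "L (cupd 0 p h) = L (cupd 0 p 1) * h" for h
  proof -
    have scale: "cupd 0 p h = h *s cupd 0 p 1"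
      by (simp add: vec_eq_iff)
    show ?thesis
      by (simp only: scale L(2) mult.commute)
  qed
  then have "(\<lambda>h. L (cupd 0 p h)) = (*) (L (cupd 0 p 1))"
    by (rule ext)
  moreover have "((\<lambda>t. f (cupd x p t)) has_derivative (\<lambda>h. L (cupd 0 p h))) (at (x $ p))"
    by (rule has_derivative_compose[OF has_derivative_cupd L(1)])
  ultimately have deriv: "((\<lambda>t. f (cupd x p t)) has_field_derivative L (cupd 0 p 1)) (at (x $ p))"
    by (simp add: has_field_derivative_def)
  then have "cpartial p f x = L (cupd 0 p 1)"
    unfolding cpartial_def by (rule DERIV_imp_deriv)
  with deriv show ?thesis
    by simp
qed

lemma cpartial_eqI:
  "((\<lambda>t. f (cupd x p t)) has_field_derivative f') (at (x $ p)) \<Longrightarrow> cpartial p f x = f'"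
  unfolding cpartial_def by (rule DERIV_imp_deriv)

lemma holomorphic_on_coordinate_line:
  assumes "open S" "cholomorphic_on f S"
  shows "(\<lambda>t. f (cupd x p t)) holomorphic_on {t. cupd x p t \<in> S}"
proof -
  have "((\<lambda>s. f (cupd x p s)) has_field_derivative cpartial p f (cupd x p t)) (at t)"
    if "cupd x p t \<in> S" for t
    using has_field_derivative_cpartial[OF assms(2) that, of p] by simp
  then show ?thesis
    using open_vimage_cupd[OF assms(1)] by (subst holomorphic_on_open) auto
qed

lemma cholomorphic_on_imp_continuous_on: "cholomorphic_on f S \<Longrightarrow> continuous_on S f"
  unfolding cholomorphic_on_def
  by (blast intro: continuous_at_imp_continuous_on has_derivative_continuous)

lemma cholomorphic_on_const: "cholomorphic_on (\<lambda>x. k) S"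
  unfolding cholomorphic_on_def by (auto intro: has_derivative_const)

lemma cholomorphic_on_mult:
  assumes f: "cholomorphic_on f S" and g: "cholomorphic_on g S"
  shows "cholomorphic_on (\<lambda>x. f x * g x) S"
  unfolding cholomorphic_on_def
proof
  fix x assume "x \<in> S"
  then obtain Lf Lg where Lf: "(f has_derivative Lf) (at x)" "\<forall>(c::complex) v. Lf (c *s v) = c * Lf v"
    and Lg: "(g has_derivative Lg) (at x)" "\<forall>(c::complex) v. Lg (c *s v) = c * Lg v"
    using f g unfolding cholomorphic_on_def by meson
  show "\<exists>L. ((\<lambda>x. f x * g x) has_derivative L) (at x) \<and> (\<forall>(c::complex) v. L (c *s v) = c * L v)"
    using Lf(2) Lg(2)
    by (intro exI[of _ "\<lambda>h. f x * Lg h + Lf h * g x"] conjI allI has_derivative_mult Lf(1) Lg(1))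
       (simp add: algebra_simps)
qed

lemma cholomorphic_on_prod:
  assumes "finite I" "\<And>i. i \<in> I \<Longrightarrow> cholomorphic_on (f i) S"
  shows "cholomorphic_on (\<lambda>x. \<Prod>i\<in>I. f i x) S"
  using assms by (induction I rule: finite_induct) (auto intro: cholomorphic_on_const cholomorphic_on_mult)

lemma cholomorphic_on_compose_holomorphic:
  assumes f: "cholomorphic_on f S" and g: "g holomorphic_on T" "open T" and "f ` S \<subseteq> T"
  shows "cholomorphic_on (\<lambda>x. g (f x)) S"
  unfolding cholomorphic_on_def
proof
  fix x assume x: "x \<in> S"
  then obtain L where L: "(f has_derivative L) (at x)" "\<forall>(c::complex) v. L (c *s v) = c * L v"
    using f unfolding cholomorphic_on_def by blast
  have "(g has_field_derivative deriv g (f x)) (at (f x))"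
    using g x \<open>f ` S \<subseteq> T\<close> by (blast intro: holomorphic_derivI)
  then have "((\<lambda>x. g (f x)) has_derivative (\<lambda>h. deriv g (f x) * L h)) (at x)"
    using has_derivative_compose[OF L(1)] by (simp add: has_field_derivative_def)
  then show "\<exists>L. ((\<lambda>x. g (f x)) has_derivative L) (at x) \<and> (\<forall>(c::complex) v. L (c *s v) = c * L v)"
    using L(2) by (intro exI[of _ "\<lambda>h. deriv g (f x) * L h"] conjI allI) simp_all
qed

lemma cholomorphic_on_compose_coordinatewise:
  fixes S :: "(complex ^ 'n) set"
  assumes u: "cholomorphic_on u D" and \<phi>: "\<phi> holomorphic_on T" "open T"
    and "\<And>x k. x \<in> S \<Longrightarrow> x $ k \<in> T" and "\<And>x. x \<in> S \<Longrightarrow> (\<chi> k. \<phi> (x $ k)) \<in> D"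
  shows "cholomorphic_on (\<lambda>x. u (\<chi> k. \<phi> (x $ k))) S"
  unfolding cholomorphic_on_def
proof
  fix x assume x: "x \<in> S"
  then obtain L where L: "(u has_derivative L) (at (\<chi> k. \<phi> (x $ k)))" "\<forall>(c::complex) v. L (c *s v) = c * L v"
    using u assms(5) unfolding cholomorphic_on_def by blast
  have "((\<lambda>y. \<phi> (y $ k)) has_derivative (\<lambda>h. deriv \<phi> (x $ k) * h $ k)) (at x)" for k :: 'n
  proof -
    have "(\<phi> has_field_derivative deriv \<phi> (x $ k)) (at (x $ k))"
      using \<phi> x assms(4) by (blast intro: holomorphic_derivI)
    then show ?thesis
      using has_derivative_compose[OF bounded_linear.has_derivative[OF bounded_linear_vec_nth has_derivative_ident]]
      by (simp add: has_field_derivative_def)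
  qed
  then have "((\<lambda>y. \<chi> k. \<phi> (y $ k)) has_derivative (\<lambda>h. \<chi> k. deriv \<phi> (x $ k) * h $ k)) (at x)"
    by (rule has_derivative_vec_lambda)
  then have deriv: "((\<lambda>y. u (\<chi> k. \<phi> (y $ k))) has_derivative (\<lambda>h. L (\<chi> k. deriv \<phi> (x $ k) * h $ k))) (at x)"
    using L(1) by (rule has_derivative_compose)
  have scale: "(\<chi> k. deriv \<phi> (x $ k) * (c *s v) $ k) = c *s (\<chi> k. deriv \<phi> (x $ k) * v $ k)"
    for c and v :: "complex ^ 'n"
    by (simp add: vec_eq_iff)
  show "\<exists>L. ((\<lambda>x. u (\<chi> k. \<phi> (x $ k))) has_derivative L) (at x) \<and> (\<forall>(c::complex) v. L (c *s v) = c * L v)"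
    by (intro exI[of _ "\<lambda>h. L (\<chi> k. deriv \<phi> (x $ k) * h $ k)"] conjI allI deriv) (simp only: scale L(2))
qed

section \<open>Existence of mixed partial derivatives\<close>

lemma norm_second_deriv_le:
  fixes g :: "complex \<Rightarrow> complex"
  assumes hol: "g holomorphic_on ball t0 (2 * \<rho>)" and cont: "continuous_on (cball t0 (2 * \<rho>)) g"
    and bnd: "\<And>t. t \<in> cball t0 (2 * \<rho>) \<Longrightarrow> norm (g t) \<le> M" and w: "w \<in> ball t0 \<rho>"
  shows "norm (deriv (deriv g) w) \<le> 2 * (M + 1) / \<rho>\<^sup>2"
proof -
  have \<rho>: "\<rho> > 0"
    using w zero_le_dist[of t0 w] unfolding mem_ball by linarith
  have ball_sub: "ball w \<rho> \<subseteq> ball t0 (2 * \<rho>)" "cball w \<rho> \<subseteq> cball t0 (2 * \<rho>)"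
    using w by (auto simp: subset_iff) (smt (verit) dist_triangle[of t0 _ w])+
  have "norm ((deriv ^^ 2) g w) \<le> fact 2 * (M + 1) / \<rho> ^ 2"
  proof (rule Cauchy_higher_deriv_bound[where y = 0])
    show "g holomorphic_on ball w \<rho>"
      using hol ball_sub(1) by (rule holomorphic_on_subset)
    show "continuous_on (cball w \<rho>) g"
      using cont ball_sub(2) by (rule continuous_on_subset)
    show "g v \<in> ball 0 (M + 1)" if "v \<in> ball w \<rho>" for v
      using bnd[of v] ball_sub that by auto
  qed (use \<rho> in auto)
  then show ?thesis
    by (simp add: numeral_2_eq_2)
qed

lemma norm_first_order_remainder_le:
  fixes g :: "complex \<Rightarrow> complex"
  assumes hol: "g holomorphic_on ball t0 (2 * \<rho>)" and cont: "continuous_on (cball t0 (2 * \<rho>)) g"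
    and bnd: "\<And>t. t \<in> cball t0 (2 * \<rho>) \<Longrightarrow> norm (g t) \<le> M"
    and \<rho>: "\<rho> > 0" and k: "norm k < \<rho>"
  shows "norm (g (t0 + k) - g t0 - deriv g t0 * k) \<le> 2 * (M + 1) / \<rho>\<^sup>2 * norm k * norm k"
proof -
  define B where "B = 2 * (M + 1) / \<rho>\<^sup>2"
  have "M \<ge> 0"
    using bnd[of t0] \<rho> by (metis centre_in_cball mult_pos_pos norm_ge_zero order_trans less_eq_real_def zero_less_numeral)
  then have B: "B \<ge> 0"
    by (simp add: B_def)
  have in_ball: "w \<in> ball t0 (2 * \<rho>)" if "w \<in> ball t0 \<rho>" for w
    using that \<rho> by auto
  have deriv_holo: "deriv g holomorphic_on ball t0 (2 * \<rho>)"
    by (rule holomorphic_deriv[OF hol open_ball])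
  have deriv_lipschitz: "norm (deriv g w - deriv g t0) \<le> B * norm (w - t0)" if w: "w \<in> ball t0 \<rho>" for w
  proof (rule field_differentiable_bound[OF convex_ball, of t0 \<rho>, where f' = "deriv (deriv g)"])
    show "(deriv g has_field_derivative deriv (deriv g) v) (at v within ball t0 \<rho>)"
      if "v \<in> ball t0 \<rho>" for v
      by (rule holomorphic_derivI[OF deriv_holo open_ball in_ball[OF that]])
    show "norm (deriv (deriv g) v) \<le> B" if "v \<in> ball t0 \<rho>" for v
      unfolding B_def by (rule norm_second_deriv_le[OF hol cont bnd that])
  qed (use w \<rho> in auto)
  define r where "r t = g t - g t0 - deriv g t0 * (t - t0)" for t
  have "norm (r (t0 + k) - r t0) \<le> B * norm k * norm (t0 + k - t0)"
  proof (rule field_differentiable_bound[OF convex_cball, of t0 "norm k", where f' = "\<lambda>w. deriv g w - deriv g t0"])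
    fix w assume w: "w \<in> cball t0 (norm k)"
    then have w': "w \<in> ball t0 \<rho>"
      using k by auto
    show "(r has_field_derivative deriv g w - deriv g t0) (at w within cball t0 (norm k))"
      unfolding r_def
      by (rule derivative_eq_intros holomorphic_derivI[OF hol open_ball in_ball[OF w']] refl)+ simp
    have "norm (deriv g w - deriv g t0) \<le> B * norm (w - t0)"
      by (rule deriv_lipschitz[OF w'])
    also have "\<dots> \<le> B * norm k"
      using w B by (intro mult_left_mono) (auto simp: dist_norm norm_minus_commute)
    finally show "norm (deriv g w - deriv g t0) \<le> B * norm k" .
  qed (auto simp: dist_norm)
  then show ?thesis
    by (simp add: r_def B_def)
qed

lemma uniform_limit_difference_quotients:
  fixes F :: "'a \<Rightarrow> complex \<Rightarrow> complex"
  assumes R: "R > 0"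
    and hol: "\<And>s. s \<in> S \<Longrightarrow> F s holomorphic_on ball t0 R"
    and cont: "\<And>s. s \<in> S \<Longrightarrow> continuous_on (cball t0 R) (F s)"
    and bnd: "\<And>s t. s \<in> S \<Longrightarrow> t \<in> cball t0 R \<Longrightarrow> norm (F s t) \<le> M"
  shows "uniform_limit S (\<lambda>k s. (F s (t0 + k) - F s t0) / k) (\<lambda>s. deriv (F s) t0) (at 0)"
  unfolding uniform_limit_iff
proof (intro allI impI)
  fix e :: real assume e: "e > 0"
  define \<rho> where "\<rho> = R / 2"
  define B where "B = 2 * (\<bar>M\<bar> + 1) / \<rho>\<^sup>2"
  have \<rho>: "\<rho> > 0" "2 * \<rho> = R"
    using R by (auto simp: \<rho>_def)
  then have B: "B > 0"
    by (simp add: B_def)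
  show "\<forall>\<^sub>F k in at 0. \<forall>s\<in>S. dist ((F s (t0 + k) - F s t0) / k) (deriv (F s) t0) < e"
    unfolding eventually_at ball_UNIV
  proof (intro exI[of _ "min \<rho> (e / B)"] conjI allI impI ballI)
    show "min \<rho> (e / B) > 0"
      using \<rho> e B by simp
    fix k :: complex and s assume k: "k \<noteq> 0 \<and> dist k 0 < min \<rho> (e / B)" and s: "s \<in> S"
    then have nk: "norm k < \<rho>" "norm k < e / B" "norm k > 0"
      by auto
    have "norm (F s t) \<le> \<bar>M\<bar>" if "t \<in> cball t0 (2 * \<rho>)" for t
      using bnd[OF s, of t] that \<rho> by auto
    then have "norm (F s (t0 + k) - F s t0 - deriv (F s) t0 * k) \<le> B * norm k * norm k"
      unfolding B_def using hol[OF s] cont[OF s] \<rho>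
      by (intro norm_first_order_remainder_le[OF _ _ _ \<rho>(1) nk(1)]) auto
    then have "dist ((F s (t0 + k) - F s t0) / k) (deriv (F s) t0) \<le> B * norm k"
      using nk by (simp add: dist_norm norm_divide divide_simps diff_divide_distrib[symmetric] del: divide_const_simps)
    also have "\<dots> < e"
      using nk B by (simp add: field_simps)
    finally show "dist ((F s (t0 + k) - F s t0) / k) (deriv (F s) t0) < e" .
  qed
qed

lemma holomorphic_on_deriv_parametric:
  fixes F :: "complex \<Rightarrow> complex \<Rightarrow> complex"
  assumes R: "R > 0"
    and cont: "continuous_on (cball s0 R \<times> cball t0 R) (\<lambda>z. F (fst z) (snd z))"
    and hol_s: "\<And>t. t \<in> cball t0 R \<Longrightarrow> (\<lambda>s. F s t) holomorphic_on ball s0 R"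
    and hol_t: "\<And>s. s \<in> cball s0 R \<Longrightarrow> F s holomorphic_on ball t0 R"
  shows "(\<lambda>s. deriv (F s) t0) holomorphic_on ball s0 R"
proof -
  have "compact ((\<lambda>z. F (fst z) (snd z)) ` (cball s0 R \<times> cball t0 R))"
    by (intro compact_continuous_image cont compact_Times compact_cball)
  then obtain M where "\<forall>y \<in> (\<lambda>z. F (fst z) (snd z)) ` (cball s0 R \<times> cball t0 R). norm y \<le> M"
    using compact_imp_bounded bounded_iff by metis
  then have M: "norm (F s t) \<le> M" if "s \<in> cball s0 R" "t \<in> cball t0 R" for s t
    using that by force
  have cont_t: "continuous_on (cball t0 R) (F s)" if "s \<in> cball s0 R" for s
  proof -
    have "continuous_on (cball t0 R) (\<lambda>t. (\<lambda>z. F (fst z) (snd z)) (s, t))"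
      by (rule continuous_on_compose2[OF cont]) (use that in \<open>auto intro!: continuous_intros\<close>)
    then show ?thesis
      by simp
  qed
  have cont_s: "continuous_on (cball s0 R) (\<lambda>s. F s t)" if "t \<in> cball t0 R" for t
  proof -
    have "continuous_on (cball s0 R) (\<lambda>s. (\<lambda>z. F (fst z) (snd z)) (s, t))"
      by (rule continuous_on_compose2[OF cont]) (use that in \<open>auto intro!: continuous_intros\<close>)
    then show ?thesis
      by simp
  qed
  have "\<forall>\<^sub>F k in at 0. continuous_on (cball s0 R) (\<lambda>s. (F s (t0 + k) - F s t0) / k)
                      \<and> (\<lambda>s. (F s (t0 + k) - F s t0) / k) holomorphic_on ball s0 R"
    unfolding eventually_at ball_UNIV
  proof (intro exI[of _ R] conjI allI impI R)
    fix k :: complex assume k: "k \<noteq> 0 \<and> dist k 0 < R"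
    then have t: "t0 + k \<in> cball t0 R" "t0 \<in> cball t0 R"
      using R by (auto simp: dist_norm)
    show "continuous_on (cball s0 R) (\<lambda>s. (F s (t0 + k) - F s t0) / k)"
      using k by (intro continuous_intros cont_s t) auto
    show "(\<lambda>s. (F s (t0 + k) - F s t0) / k) holomorphic_on ball s0 R"
      using k by (intro holomorphic_intros hol_s t) auto
  qed
  then show ?thesis
    using uniform_limit_difference_quotients[OF R hol_t cont_t M]
    by (rule holomorphic_uniform_limit) auto
qed

lemma has_field_derivative_cpartial_cpartial:
  assumes S: "open S" and u: "cholomorphic_on u S" and z: "z \<in> S" and pq: "p \<noteq> q"
  shows "((\<lambda>s. cpartial q u (cupd z p s)) has_field_derivative cpartial p (cpartial q u) z) (at (z $ p))"
proof -
  obtain \<epsilon> where \<epsilon>: "\<epsilon> > 0" "ball z \<epsilon> \<subseteq> S"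
    using S z open_contains_ball by blast
  define R where "R = \<epsilon> / 3"
  have R: "R > 0"
    using \<epsilon> by (simp add: R_def)
  define F where "F s t = u (cupd (cupd z p s) q t)" for s t
  have in_S: "cupd (cupd z p s) q t \<in> S" if "s \<in> cball (z $ p) R" "t \<in> cball (z $ q) R" for s t
  proof -
    have "dist (cupd (cupd z p s) q t) z < \<epsilon>"
      using dist_cupd_cupd_le[OF pq, of z s t] that \<epsilon> by (simp add: R_def dist_commute)
    then show ?thesis
      using \<epsilon>(2) by (auto simp: dist_commute)
  qed
  have cont: "continuous_on (cball (z $ p) R \<times> cball (z $ q) R) (\<lambda>w. F (fst w) (snd w))"
    unfolding F_def using in_S
    by (auto intro: continuous_on_compose2[OF cholomorphic_on_imp_continuous_on[OF u] continuous_on_cupd_cupd])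
  have hol_s: "(\<lambda>s. F s t) holomorphic_on ball (z $ p) R" if t: "t \<in> cball (z $ q) R" for t
  proof -
    have "(\<lambda>s. u (cupd (cupd z q t) p s)) holomorphic_on {s. cupd (cupd z q t) p s \<in> S}"
      by (rule holomorphic_on_coordinate_line[OF S u])
    then show ?thesis
      unfolding F_def using in_S[OF _ t] pq
      by (auto simp: cupd_commute intro: holomorphic_on_subset)
  qed
  have hol_t: "F s holomorphic_on ball (z $ q) R" if s: "s \<in> cball (z $ p) R" for s
  proof -
    have "(\<lambda>t. u (cupd (cupd z p s) q t)) holomorphic_on {t. cupd (cupd z p s) q t \<in> S}"
      by (rule holomorphic_on_coordinate_line[OF S u])
    then show ?thesis
      unfolding F_def using in_S[OF s]
      by (auto intro: holomorphic_on_subset)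
  qed
  have "(\<lambda>s. cpartial q u (cupd z p s)) = (\<lambda>s. deriv (F s) (z $ q))"
    using pq by (simp add: fun_eq_iff cpartial_def F_def[abs_def])
  moreover have "(\<lambda>s. deriv (F s) (z $ q)) holomorphic_on ball (z $ p) R"
    by (rule holomorphic_on_deriv_parametric[OF R cont hol_s hol_t])
  ultimately obtain f' where f': "((\<lambda>s. cpartial q u (cupd z p s)) has_field_derivative f') (at (z $ p))"
    using R holomorphic_on_imp_differentiable_at[of _ "ball (z $ p) R" "z $ p"]
    by (auto simp: field_differentiable_def)
  then show ?thesis
    using cpartial_eqI[OF f'] by simp
qed

section \<open>Moebius transformations\<close>

definition moebius :: "complex \<Rightarrow> complex \<Rightarrow> complex \<Rightarrow> complex \<Rightarrow> complex \<Rightarrow> complex" where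
  "moebius a b c d t = (a * t + b) / (c * t + d)"

lemma holomorphic_on_moebius: "moebius a b c d holomorphic_on {t. c * t + d \<noteq> 0}"
  unfolding moebius_def by (intro holomorphic_intros) auto

lemma has_field_derivative_moebius:
  assumes "a * d - b * c = 1" "c * t + d \<noteq> 0"
  shows "(moebius a b c d has_field_derivative 1 / (c * t + d)\<^sup>2) (at t)"
proof -
  have "a * (c * t + d) - (a * t + b) * c = 1"
    using assms(1) by (simp add: algebra_simps)
  then show ?thesis
    unfolding moebius_def using assms(2)
    by (auto intro!: derivative_eq_intros simp: power2_eq_square)
qed

lemma moebius_diff:
  assumes "a * d - b * c = 1" "c * x + d \<noteq> 0" "c * y + d \<noteq> 0"
  shows "moebius a b c d x - moebius a b c d y = (x - y) / ((c * x + d) * (c * y + d))"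
proof -
  have "(a * x + b) * (c * y + d) - (a * y + b) * (c * x + d) = (a * d - b * c) * (x - y)"
    by (simp add: algebra_simps)
  then show ?thesis
    unfolding moebius_def using assms by (simp add: diff_frac_eq)
qed

lemma has_field_derivative_log_branch_line:
  assumes S: "open S" and l: "cholomorphic_on l S" and branch: "\<And>y. y \<in> S \<Longrightarrow> exp (l y) = h y"
    and x: "x \<in> S" and h': "((\<lambda>t. h (cupd x p t)) has_field_derivative h') (at (x $ p))" and "h x \<noteq> 0"
  shows "((\<lambda>t. l (cupd x p t)) has_field_derivative h' / h x) (at (x $ p))"
proof -
  let ?l' = "cpartial p l x"
  have l': "((\<lambda>t. l (cupd x p t)) has_field_derivative ?l') (at (x $ p))"
    by (rule has_field_derivative_cpartial[OF l x])
  have "((\<lambda>t. exp (l (cupd x p t))) has_field_derivative exp (l x) * ?l') (at (x $ p))"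
    using DERIV_chain2[OF DERIV_exp l'] by simp
  then have "((\<lambda>t. h (cupd x p t)) has_field_derivative exp (l x) * ?l') (at (x $ p))"
    using open_vimage_cupd[OF S, of x p] x branch
    by (elim has_field_derivative_transform_within_open) auto
  then have "h x * ?l' = h'"
    using DERIV_unique[OF _ h'] branch[OF x] by simp
  then have "?l' = h' / h x"
    using \<open>h x \<noteq> 0\<close> by (simp add: field_simps)
  with l' show ?thesis
    by simp
qed

lemma Mop_gauge_identity:
  fixes c d xp xq yp yq wp wq ap aq E v vp vq vpq :: complex
  assumes wp: "wp * (c * xp + d) = 1" and wq: "wq * (c * xq + d) = 1" and x: "xp \<noteq> xq"
    and y: "yp - yq = (xp - xq) * wp * wq"
  shows "E * (ap * c * wp * (aq * c * wq * v + wq\<^sup>2 * vq) + wp\<^sup>2 * (aq * c * wq * vp + wq\<^sup>2 * vpq))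
         + aq / (xp - xq) * (E * (ap * c * wp * v + wp\<^sup>2 * vp))
         + ap / (xq - xp) * (E * (aq * c * wq * v + wq\<^sup>2 * vq))
       = E * wp\<^sup>2 * wq\<^sup>2 * (vpq + aq / (yp - yq) * vp + ap / (yq - yp) * vq)"
proof -
  have "yp - yq \<noteq> 0"
    using wp wq x y by auto
  then have R: "inverse (xp - xq) * (xp - xq) = 1" and S: "inverse (yp - yq) * (yp - yq) = 1"
    using x by auto
  have "inverse (xq - xp) = - inverse (xp - xq)" "inverse (yq - yp) = - inverse (yp - yq)"
    by (metis inverse_minus_eq minus_diff_eq)+
  then show ?thesis
    unfolding divide_inverse using R S wp wq y by algebra
qed

section \<open>The gauge-transformed solution\<close>

locale moebius_gauge =
  fixes \<alpha> :: "complex ^ 'n" and u :: "complex ^ 'n \<Rightarrow> complex" and D D' :: "(complex ^ 'n) set"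
    and a b c d :: complex and lg :: "'n \<Rightarrow> complex ^ 'n \<Rightarrow> complex"
  assumes open_D: "open D" and u_hol: "cholomorphic_on u D"
    and SL2: "a * d - b * c = 1"
    and open_D': "open D'"
    and denom_nz: "\<And>x k. x \<in> D' \<Longrightarrow> c * x $ k + d \<noteq> 0"
    and maps_into_D: "\<And>x. x \<in> D' \<Longrightarrow> (\<chi> k. moebius a b c d (x $ k)) \<in> D"
    and lg_hol: "\<And>k. cholomorphic_on (lg k) D'"
    and lg_branch: "\<And>k x. x \<in> D' \<Longrightarrow> exp (lg k x) = c * x $ k + d"
begin

definition act :: "complex ^ 'n \<Rightarrow> complex ^ 'n" where
  "act x = (\<chi> k. moebius a b c d (x $ k))"

definition weight :: "complex ^ 'n \<Rightarrow> 'n \<Rightarrow> complex" where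
  "weight x k = 1 / (c * x $ k + d)"

definition gauge :: "complex ^ 'n \<Rightarrow> complex" where
  "gauge x = (\<Prod>k\<in>UNIV. exp (\<alpha> $ k * lg k x))"

definition u_tilde :: "complex ^ 'n \<Rightarrow> complex" where
  "u_tilde x = gauge x * u (act x)"

lemma act_nth [simp]: "act x $ k = moebius a b c d (x $ k)"
  by (simp add: act_def)

lemma act_cupd: "act (cupd x p t) = cupd (act x) p (moebius a b c d t)"
  by (simp add: vec_eq_iff)

lemma act_in_D: "x \<in> D' \<Longrightarrow> act x \<in> D"
  unfolding act_def by (rule maps_into_D)

lemma weight_mult_denom: "x \<in> D' \<Longrightarrow> weight x k * (c * x $ k + d) = 1"
  by (simp add: weight_def denom_nz)

lemma has_field_derivative_lg_line:
  assumes "x \<in> D'"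
  shows "((\<lambda>t. lg k (cupd x p t)) has_field_derivative (if k = p then c * weight x p else 0)) (at (x $ p))"
proof -
  have "((\<lambda>t. c * cupd x p t $ k + d) has_field_derivative (if k = p then c else 0)) (at (x $ p))"
    by (cases "k = p") (auto intro!: derivative_eq_intros)
  from has_field_derivative_log_branch_line[OF open_D' lg_hol lg_branch assms this denom_nz[OF assms]]
  show ?thesis
    by (cases "k = p") (simp_all add: weight_def)
qed

lemma has_field_derivative_gauge_line:
  assumes "x \<in> D'"
  shows "((\<lambda>t. gauge (cupd x p t)) has_field_derivative gauge x * (\<alpha> $ p * c * weight x p)) (at (x $ p))"
proof -
  have gauge_exp: "gauge y = exp (\<Sum>k\<in>UNIV. \<alpha> $ k * lg k y)" for y
    by (simp add: gauge_def exp_sum)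
  have "((\<lambda>t. \<Sum>k\<in>UNIV. \<alpha> $ k * lg k (cupd x p t)) has_field_derivative
          (\<Sum>k\<in>UNIV. \<alpha> $ k * (if k = p then c * weight x p else 0))) (at (x $ p))"
    by (intro DERIV_sum DERIV_cmult has_field_derivative_lg_line[OF assms])
  moreover have "(\<Sum>k\<in>UNIV. \<alpha> $ k * (if k = p then c * weight x p else 0)) = \<alpha> $ p * c * weight x p"
    by (simp add: if_distrib mult.assoc cong: if_cong)
  ultimately have "((\<lambda>t. \<Sum>k\<in>UNIV. \<alpha> $ k * lg k (cupd x p t)) has_field_derivative \<alpha> $ p * c * weight x p)
                     (at (x $ p))"
    by simp
  from DERIV_chain2[OF DERIV_exp this] show ?thesis
    unfolding gauge_exp by simp
qed

lemma has_field_derivative_comp_act_line: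
  assumes "x \<in> D'" and f': "((\<lambda>s. f (cupd (act x) p s)) has_field_derivative f') (at (act x $ p))"
  shows "((\<lambda>t. f (act (cupd x p t))) has_field_derivative f' * (weight x p)\<^sup>2) (at (x $ p))"
proof -
  have "(moebius a b c d has_field_derivative (weight x p)\<^sup>2) (at (x $ p))"
    using has_field_derivative_moebius[OF SL2 denom_nz[OF assms(1)]] by (simp add: weight_def power_divide)
  from DERIV_chain2[OF f'[unfolded act_nth] this] show ?thesis
    by (simp add: act_cupd)
qed

lemma has_field_derivative_gauge_mult_line:
  assumes "x \<in> D'" and f': "((\<lambda>s. f (cupd (act x) p s)) has_field_derivative f') (at (act x $ p))"
  shows "((\<lambda>t. gauge (cupd x p t) * f (act (cupd x p t))) has_field_derivative
           gauge x * (\<alpha> $ p * c * weight x p * f (act x) + (weight x p)\<^sup>2 * f')) (at (x $ p))"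
  using DERIV_mult[OF has_field_derivative_gauge_line[OF assms(1)] has_field_derivative_comp_act_line[OF assms]]
  by (simp add: algebra_simps)

lemma cpartial_u_tilde:
  assumes "x \<in> D'"
  shows "cpartial p u_tilde x
           = gauge x * (\<alpha> $ p * c * weight x p * u (act x) + (weight x p)\<^sup>2 * cpartial p u (act x))"
  using has_field_derivative_gauge_mult_line[OF assms has_field_derivative_cpartial[OF u_hol act_in_D[OF assms]]]
  by (intro cpartial_eqI) (simp add: u_tilde_def)

lemma cpartial_cpartial_u_tilde:
  assumes x: "x \<in> D'" and pq: "p \<noteq> q"
  shows "cpartial p (cpartial q u_tilde) x
           = gauge x * (\<alpha> $ p * c * weight x p * (\<alpha> $ q * c * weight x q * u (act x) + (weight x q)\<^sup>2 * cpartial q u (act x))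
               + (weight x p)\<^sup>2 * (\<alpha> $ q * c * weight x q * cpartial p u (act x)
                                      + (weight x q)\<^sup>2 * cpartial p (cpartial q u) (act x)))"
proof -
  define f where "f y = \<alpha> $ q * c * weight x q * u y + (weight x q)\<^sup>2 * cpartial q u y" for y
  have "((\<lambda>s. f (cupd (act x) p s)) has_field_derivative
          \<alpha> $ q * c * weight x q * cpartial p u (act x) + (weight x q)\<^sup>2 * cpartial p (cpartial q u) (act x))
          (at (act x $ p))"
    unfolding f_def
    by (intro DERIV_add DERIV_cmult has_field_derivative_cpartial[OF u_hol act_in_D[OF x]]
        has_field_derivative_cpartial_cpartial[OF open_D u_hol act_in_D[OF x] pq])
  from has_field_derivative_gauge_mult_line[OF x this]
  have "((\<lambda>t. gauge (cupd x p t) * f (act (cupd x p t))) has_field_derivative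
           gauge x * (\<alpha> $ p * c * weight x p * f (act x) + (weight x p)\<^sup>2 *
             (\<alpha> $ q * c * weight x q * cpartial p u (act x) + (weight x q)\<^sup>2 * cpartial p (cpartial q u) (act x))))
         (at (x $ p))" .
  \<comment> \<open>on the line through \<open>x\<close> in direction \<open>p\<close>, \<open>cpartial q u_tilde = gauge * f \<circ> act\<close>,
    since \<open>weight _ q\<close> is constant there\<close>
  then have "((\<lambda>t. cpartial q u_tilde (cupd x p t)) has_field_derivative
           gauge x * (\<alpha> $ p * c * weight x p * f (act x) + (weight x p)\<^sup>2 *
             (\<alpha> $ q * c * weight x q * cpartial p u (act x) + (weight x q)\<^sup>2 * cpartial p (cpartial q u) (act x))))
         (at (x $ p))"
    by (rule has_field_derivative_transform_within_open[OF _ open_vimage_cupd[OF open_D', of x p]])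
       (use x pq in \<open>auto simp: cpartial_u_tilde f_def weight_def\<close>)
  then show ?thesis
    unfolding f_def by (rule cpartial_eqI)
qed

lemma Mop_u_tilde:
  assumes x: "x \<in> D'" and pq: "p \<noteq> q" and act_ne: "act x $ p \<noteq> act x $ q"
  shows "Mop \<alpha> p q u_tilde x = gauge x * (weight x p)\<^sup>2 * (weight x q)\<^sup>2 * Mop \<alpha> p q u (act x)"
proof -
  have "x $ p \<noteq> x $ q"
    using act_ne by auto
  moreover have "act x $ p - act x $ q = (x $ p - x $ q) * weight x p * weight x q"
    using moebius_diff[OF SL2 denom_nz[OF x] denom_nz[OF x]] by (simp add: weight_def)
  ultimately show ?thesis
    unfolding Mop_def cpartial_cpartial_u_tilde[OF x pq] cpartial_u_tilde[OF x]
    by (rule Mop_gauge_identity[OF weight_mult_denom[OF x] weight_mult_denom[OF x]])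
qed

lemma cholomorphic_on_u_tilde: "cholomorphic_on u_tilde D'"
proof -
  have "cholomorphic_on (\<lambda>x. exp (\<alpha> $ k * lg k x)) D'" for k
    by (rule cholomorphic_on_compose_holomorphic[OF lg_hol, of "\<lambda>z. exp (\<alpha> $ k * z)" UNIV])
       (auto intro: holomorphic_intros)
  then have "cholomorphic_on gauge D'"
    unfolding gauge_def[abs_def] by (intro cholomorphic_on_prod) auto
  moreover have "open {t. c * t + d \<noteq> 0}"
    by (rule open_Collect_neq) (intro continuous_intros)+
  then have "cholomorphic_on (\<lambda>x. u (act x)) D'"
    unfolding act_def
    by (rule cholomorphic_on_compose_coordinatewise[OF u_hol holomorphic_on_moebius])
       (simp_all add: denom_nz maps_into_D)
  ultimately show ?thesis
    unfolding u_tilde_def[abs_def] by (rule cholomorphic_on_mult)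
qed

end

theorem mainTheorem9:
  fixes \<alpha> :: "complex ^ 'n"
    and u :: "complex ^ 'n \<Rightarrow> complex"
    and D D' :: "(complex ^ 'n) set"
    and a b c d :: complex
    and lg :: "'n \<Rightarrow> complex ^ 'n \<Rightarrow> complex"
  assumes D_dom: "open D" "connected D" "D \<noteq> {}"
    and D_sub: "D \<subseteq> {x. \<forall>i j. i \<noteq> j \<longrightarrow> x $ i \<noteq> x $ j}"
    and u_hol: "cholomorphic_on u D"
    and u_sol: "\<forall>p q. p \<noteq> q \<longrightarrow> (\<forall>x\<in>D. Mop \<alpha> p q u x = 0)"
    and SL2: "a * d - b * c = 1"
    and D'_dom: "open D'" "connected D'" "D' \<noteq> {}" "simply_connected D'"
    and D'_nz: "\<forall>x\<in>D'. \<forall>k. c * x $ k + d \<noteq> 0"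
    and D'_map: "\<forall>x\<in>D'. (\<chi> k. (a * x $ k + b) / (c * x $ k + d)) \<in> D"
    and lg_hol: "\<forall>k. cholomorphic_on (lg k) D'"
    and lg_branch: "\<forall>k. \<forall>x\<in>D'. exp (lg k x) = c * x $ k + d"
  shows "cholomorphic_on
           (\<lambda>x. (\<Prod>k\<in>UNIV. exp (\<alpha> $ k * lg k x)) * u (\<chi> k. (a * x $ k + b) / (c * x $ k + d))) D'
       \<and> (\<forall>p q. p \<noteq> q \<longrightarrow> (\<forall>x\<in>D'.
            Mop \<alpha> p q (\<lambda>x. (\<Prod>k\<in>UNIV. exp (\<alpha> $ k * lg k x)) * u (\<chi> k. (a * x $ k + b) / (c * x $ k + d))) x = 0))"
proof -
  \<comment> \<open>connectedness and simple connectivity only guarantee that the branches \<open>lg\<close> exist;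
    they are given here\<close>
  interpret moebius_gauge \<alpha> u D D' a b c d lg
    using assms by unfold_locales (auto simp: moebius_def)
  have u_tilde_eq: "(\<lambda>x. (\<Prod>k\<in>UNIV. exp (\<alpha> $ k * lg k x)) * u (\<chi> k. (a * x $ k + b) / (c * x $ k + d))) = u_tilde"
    by (simp add: fun_eq_iff u_tilde_def gauge_def act_def moebius_def)
  have "Mop \<alpha> p q u_tilde x = 0" if pq: "p \<noteq> q" and x: "x \<in> D'" for p q x
  proof -
    have "act x $ p \<noteq> act x $ q"
      using D_sub act_in_D[OF x] pq by blast
    then show ?thesis
      using Mop_u_tilde[OF x pq] u_sol act_in_D[OF x] pq by simp
  qed
  then show ?thesis
    unfolding u_tilde_eq using cholomorphic_on_u_tilde by blast
qed

end
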